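(* Let $r\le n$, let $\beta:[r]\to[2n]$ be injective, and let $A\in\mathrm{Sp}_{2n}$ satisfy $Ae_{2n,\beta(i)}=e_{2n,i}$ and $e_{2n,i}^{\top}A=e_{2n,\beta(i)}^{\top}$ for all $i\in[r]$. Then $\beta$ is qubit-injective, and for all $i\in[r]$: $Ae_{2n,2n+1-\beta(i)}=e_{2n,2n+1-i}$ and $e_{2n,2n+1-i}^{\top}A=e_{2n,2n+1-\beta(i)}^{\top}$.
   Context: $\mathbb{F}$ is the field with two elements, $[N]=\{1,\dots,N\}$, $e_{2n,i}$ standard basis column vectors of $\mathbb{F}^{2n}$. $R_{2n}=\sum_{i=1}^{2n}e_{2n,i}e_{2n,2n+1-i}^{\top}$; $\mathrm{Sp}_{2n}=\{C\in\mathbb{F}^{2n\times2n}:C^{\top}R_{2n}C=R_{2n}\}$. $Q_n(i)=\min(i,2n+1-i)$; $\beta$ is qubit-injective if $Q_n\circ\beta$ is injective. *)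

theory Defs
  imports "Jordan_Normal_Form.Matrix" "HOL-Library.Z2"
begin

text \<open>The field with two elements is the type bit (HOL-Library.Z2).
  Indices are 1-based as in the paper: e n i is the i-th standard basis
  column vector of F^(2n), represented as a (2n) x 1 matrix.\<close>

definition e :: "nat \<Rightarrow> nat \<Rightarrow> bit mat" where
  "e n i = mat (2*n) 1 (\<lambda>(a,b). if a + 1 = i then 1 else 0)"

text \<open>R_{2n} = sum_i e_i e_{2n+1-i}^T: entry (a,b) (1-based) is 1 iff b = 2n+1-a.\<close>
definition R :: "nat \<Rightarrow> bit mat" where
  "R n = mat (2*n) (2*n) (\<lambda>(a,b). if (b + 1) = 2*n + 1 - (a + 1) then 1 else 0)"

definition Sp :: "nat \<Rightarrow> bit mat set" where
  "Sp n = {C \<in> carrier_mat (2*n) (2*n). C\<^sup>T * R n * C = R n}"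

definition Q :: "nat \<Rightarrow> nat \<Rightarrow> nat" where
  "Q n i = min i (2*n + 1 - i)"

definition qubit_injective :: "nat \<Rightarrow> nat \<Rightarrow> (nat \<Rightarrow> nat) \<Rightarrow> bool" where
  "qubit_injective n r \<beta> \<longleftrightarrow> inj_on (Q n \<circ> \<beta>) {1..r}"

end

theory Submission imports Defs "Jordan_Normal_Form.Determinant" begin

(* Since R is an involution, a symplectic A has the inverse R A^T R, so A^T is symplectic too,
   i.e. A R A^T = R. Reading e_i^T A = e_(beta i)^T as A^T e_i = e_(beta i) gives
   A e_(2n+1-beta i) = A R A^T e_i = R e_i = e_(2n+1-i), and the row identity is the same
   argument for A^T. Finally beta j = 2n+1-beta i would force e_j = A e_(beta j) = e_(2n+1-i),
   impossible since j <= r <= n < 2n+1-i. *)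

lemma dim_R [simp]: "dim_row (R n) = 2*n" "dim_col (R n) = 2*n"
  by (simp_all add: R_def)

lemma dim_e [simp]: "dim_row (e n i) = 2*n" "dim_col (e n i) = 1"
  by (simp_all add: e_def)

lemma R_carrier [simp]: "R n \<in> carrier_mat (2*n) (2*n)"
  by (simp add: R_def)

lemma e_carrier [simp]: "e n i \<in> carrier_mat (2*n) 1"
  by (simp add: e_def)

lemma transpose_R [simp]: "(R n)\<^sup>T = R n"
  by (rule eq_matI) (auto simp: R_def)

lemma R_mult_R: "R n * R n = 1\<^sub>m (2*n)"
proof (rule eq_matI)
  fix a b assume "a < dim_row (1\<^sub>m (2*n) :: bit mat)" "b < dim_col (1\<^sub>m (2*n) :: bit mat)"
  then have ab: "a < 2*n" "b < 2*n" by auto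
  have "(R n * R n) $$ (a,b) = row (R n) a \<bullet> col (R n) b"
    using ab by simp
  also have "\<dots> = (\<Sum>k\<in>{0..<2*n}. if k = 2*n-1-a then (if b = 2*n-1-k then 1 else 0) else 0)"
    unfolding scalar_prod_def using ab by (intro sum.cong) (auto simp: R_def)
  also have "\<dots> = 1\<^sub>m (2*n) $$ (a,b)"
    using ab by (subst sum.delta) auto
  finally show "(R n * R n) $$ (a,b) = 1\<^sub>m (2*n) $$ (a,b)" .
qed (auto simp: R_def)

lemma R_mult_e: "i \<in> {1..2*n} \<Longrightarrow> R n * e n i = e n (2*n+1-i)"
proof (rule eq_matI)
  fix a b assume i: "i \<in> {1..2*n}" and "a < dim_row (e n (2*n+1-i))" "b < dim_col (e n (2*n+1-i))"
  then have ab: "a < 2*n" "b = 0" by (auto simp: e_def)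
  have "(R n * e n i) $$ (a,b) = row (R n) a \<bullet> col (e n i) b"
    using ab by simp
  also have "\<dots> = (\<Sum>k\<in>{0..<2*n}. if k = 2*n-1-a then (if k+1 = i then 1 else 0) else 0)"
    unfolding scalar_prod_def using ab by (intro sum.cong) (auto simp: R_def e_def)
  also have "\<dots> = e n (2*n+1-i) $$ (a,b)"
    using ab i by (subst sum.delta) (auto simp: e_def)
  finally show "(R n * e n i) $$ (a,b) = e n (2*n+1-i) $$ (a,b)" .
qed (auto simp: R_def e_def)

lemma inj_on_e: "inj_on (e n) {1..2*n}"
proof (rule inj_onI)
  fix i j assume "i \<in> {1..2*n}" "j \<in> {1..2*n}" "e n i = e n j"
  then have "e n i $$ (i-1,0) = e n j $$ (i-1,0)" by simp
  with \<open>i \<in> {1..2*n}\<close> \<open>j \<in> {1..2*n}\<close> show "i = j" by (auto simp: e_def split: if_splits)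
qed

lemma Q_eq_imp:
  assumes "Q n a = Q n b" "a \<in> {1..2*n}" "b \<in> {1..2*n}"
  shows "a = b \<or> b = 2*n+1-a"
  using assms by (auto simp: Q_def)

lemma e_transpose_mult_eq_iff:
  assumes "A \<in> carrier_mat (2*n) (2*n)"
  shows "(e n i)\<^sup>T * A = (e n j)\<^sup>T \<longleftrightarrow> A\<^sup>T * e n i = e n j"
proof -
  have "((e n i)\<^sup>T * A)\<^sup>T = A\<^sup>T * e n i"
    using transpose_mult[OF transpose_carrier_mat[THEN iffD2, OF e_carrier] assms] by simp
  then show ?thesis by (metis transpose_transpose)
qed

lemma Sp_transpose:
  assumes "A \<in> Sp n"
  shows "A\<^sup>T \<in> Sp n"
proof -
  have A: "A \<in> carrier_mat (2*n) (2*n)" and sp: "A\<^sup>T * R n * A = R n"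
    using assms by (auto simp: Sp_def)
  have AT: "A\<^sup>T \<in> carrier_mat (2*n) (2*n)"
    using A by simp
  note RA = mult_carrier_mat[OF R_carrier A] and RAT = mult_carrier_mat[OF R_carrier AT]
  note RATR = mult_carrier_mat[OF RAT R_carrier]
  have "(R n * A\<^sup>T * R n) * A = R n * (A\<^sup>T * R n * A)"
    using assoc_mult_mat[OF RAT R_carrier A] assoc_mult_mat[OF R_carrier AT RA]
      assoc_mult_mat[OF AT R_carrier A] by simp
  also have "\<dots> = 1\<^sub>m (2*n)"
    using sp R_mult_R by simp
  finally have inverse: "A * (R n * A\<^sup>T * R n) = 1\<^sub>m (2*n)"
    by (rule mat_mult_left_right_inverse[OF RATR A])
  have "A * R n * A\<^sup>T = A * ((R n * A\<^sup>T) * (R n * R n))"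
    using assoc_mult_mat[OF A R_carrier AT] right_mult_one_mat[OF RAT] by (simp add: R_mult_R)
  also have "\<dots> = (A * (R n * A\<^sup>T * R n)) * R n"
    using assoc_mult_mat[OF A RATR R_carrier] assoc_mult_mat[OF RAT R_carrier R_carrier] by simp
  also have "\<dots> = R n"
    using inverse by simp
  finally show ?thesis
    using A by (simp add: Sp_def)
qed

lemma Sp_mult_e_mirror:
  assumes "A \<in> Sp n" "i \<in> {1..2*n}" "j \<in> {1..2*n}" "A\<^sup>T * e n i = e n j"
  shows "A * e n (2*n+1-j) = e n (2*n+1-i)"
proof -
  have A: "A \<in> carrier_mat (2*n) (2*n)" and ARAT: "A * R n * A\<^sup>T = R n"
    using assms(1) Sp_transpose[OF assms(1)] by (auto simp: Sp_def)
  have AT: "A\<^sup>T \<in> carrier_mat (2*n) (2*n)"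
    using A by simp
  note AR = mult_carrier_mat[OF A R_carrier] and ATe = mult_carrier_mat[OF AT e_carrier]
  have "A * e n (2*n+1-j) = A * (R n * (A\<^sup>T * e n i))"
    using assms(3,4) by (simp add: R_mult_e)
  also have "\<dots> = (A * R n * A\<^sup>T) * e n i"
    using assoc_mult_mat[OF A R_carrier ATe] assoc_mult_mat[OF AR AT e_carrier] by simp
  also have "\<dots> = e n (2*n+1-i)"
    using ARAT assms(2) by (simp add: R_mult_e)
  finally show ?thesis .
qed

theorem lemma10:
  fixes n r :: nat and \<beta> :: "nat \<Rightarrow> nat" and A :: "bit mat"
  assumes "r \<le> n"
    and "\<beta> ` {1..r} \<subseteq> {1..2*n}"
    and "inj_on \<beta> {1..r}"
    and "A \<in> Sp n"
    and "\<And>i. i \<in> {1..r} \<Longrightarrow> A * e n (\<beta> i) = e n i"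
    and "\<And>i. i \<in> {1..r} \<Longrightarrow> (e n i)\<^sup>T * A = (e n (\<beta> i))\<^sup>T"
  shows "qubit_injective n r \<beta> \<and>
    (\<forall>i\<in>{1..r}. A * e n (2*n + 1 - \<beta> i) = e n (2*n + 1 - i) \<and>
                 (e n (2*n + 1 - i))\<^sup>T * A = (e n (2*n + 1 - \<beta> i))\<^sup>T)"
proof -
  have A: "A \<in> carrier_mat (2*n) (2*n)"
    using assms(4) by (simp add: Sp_def)
  have i_range: "i \<in> {1..2*n}" and \<beta>_range: "\<beta> i \<in> {1..2*n}" if "i \<in> {1..r}" for i
    using that assms(1) imageI[THEN subsetD[OF assms(2)], OF that] by auto
  have col: "A * e n (2*n + 1 - \<beta> i) = e n (2*n + 1 - i)" if "i \<in> {1..r}" for i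
    using Sp_mult_e_mirror[OF assms(4)] assms(6)[OF that] i_range[OF that] \<beta>_range[OF that]
    by (simp add: e_transpose_mult_eq_iff[OF A])
  have row: "(e n (2*n + 1 - i))\<^sup>T * A = (e n (2*n + 1 - \<beta> i))\<^sup>T" if "i \<in> {1..r}" for i
    using Sp_mult_e_mirror[OF Sp_transpose[OF assms(4)]] assms(5)[OF that] i_range[OF that] \<beta>_range[OF that]
    by (simp add: e_transpose_mult_eq_iff[OF A])
  have "qubit_injective n r \<beta>"
    unfolding qubit_injective_def
  proof (rule inj_onI)
    fix i j assume i: "i \<in> {1..r}" and j: "j \<in> {1..r}"
    assume "(Q n \<circ> \<beta>) i = (Q n \<circ> \<beta>) j"
    then have "\<beta> i = \<beta> j \<or> \<beta> j = 2*n+1-\<beta> i"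
      using Q_eq_imp \<beta>_range[OF i] \<beta>_range[OF j] by simp
    then show "i = j"
    proof
      assume "\<beta> j = 2*n+1-\<beta> i"
      then have "e n j = e n (2*n+1-i)"
        using assms(5)[OF j] col[OF i] by simp
      then have "j = 2*n+1-i"
        by (rule inj_onD[OF inj_on_e]) (use i j assms(1) in auto)
      with i j assms(1) show ?thesis by auto
    qed (use assms(3) i j in \<open>auto dest: inj_onD\<close>)
  qed
  with col row show ?thesis by blast
qed

end
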